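(* Let $\mathbb{F}$ be an infinite field with $\operatorname{char}(\mathbb{F})\neq 2$, let $G$ be a group with a group involution $\ast$ and a non-trivial orientation $\sigma$ such that $gg^\ast\in N=\ker\sigma$ for all $g\in G$, and let $\circledast$ be the associated oriented involution of $\mathbb{F}G$. Assume $\mathbb{F}G$ is normal with respect to $\circledast$, and let $g,h\in G$. (1) If $\sigma(g)\sigma(h)=1$, then either $gh=hg$ or $gh=g^\ast h^\ast$. (2) If $\sigma(g)\sigma(h)=-1$, then either $gh=hg$ or $gh=(gh)^\ast$.
   Context: A group involution on $G$ is a map $\ast:G\to G$ with $(gh)^\ast=h^\ast g^\ast$ and $(g^\ast)^\ast=g$. An orientation is a group homomorphism $\sigma:G\to\{\pm1\}$. The oriented involution is $\circledast:\mathbb{F}G\to\mathbb{F}G$, $(\sum_g\alpha_g g)^\circledast=\sum_g\alpha_g\sigma(g)g^\ast$; the condition $gg^\ast\in\ker\sigma$ for all $g$ ensures it is an algebra involution. $\mathbb{F}G$ is normal (with respect to $\circledast$) if $\alpha\alpha^\circledast=\alpha^\circledast\alpha$ for all $\alpha\in\mathbb{F}G$. *)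

theory Defs
  imports "HOL-Algebra.Group"
begin

definition group_involution :: "('g, 'b) monoid_scheme \<Rightarrow> ('g \<Rightarrow> 'g) \<Rightarrow> bool" where
  "group_involution G s \<longleftrightarrow>
     (\<forall>g\<in>carrier G. s g \<in> carrier G) \<and>
     (\<forall>g\<in>carrier G. \<forall>h\<in>carrier G. s (g \<otimes>\<^bsub>G\<^esub> h) = s h \<otimes>\<^bsub>G\<^esub> s g) \<and>
     (\<forall>g\<in>carrier G. s (s g) = g)"

definition orientation :: "('g, 'b) monoid_scheme \<Rightarrow> ('g \<Rightarrow> int) \<Rightarrow> bool" where
  "orientation G \<sigma> \<longleftrightarrow>
     (\<forall>g\<in>carrier G. \<sigma> g \<in> {1, -1}) \<and>
     (\<forall>g\<in>carrier G. \<forall>h\<in>carrier G. \<sigma> (g \<otimes>\<^bsub>G\<^esub> h) = \<sigma> g * \<sigma> h)"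

definition group_alg :: "('g, 'b) monoid_scheme \<Rightarrow> ('g \<Rightarrow> 'f::field) set" where
  "group_alg G = {\<alpha>. finite {x. \<alpha> x \<noteq> 0} \<and> {x. \<alpha> x \<noteq> 0} \<subseteq> carrier G}"

definition ga_mult :: "('g, 'b) monoid_scheme \<Rightarrow> ('g \<Rightarrow> 'f::field) \<Rightarrow> ('g \<Rightarrow> 'f) \<Rightarrow> ('g \<Rightarrow> 'f)" where
  "ga_mult G \<alpha> \<beta> = (\<lambda>x. if x \<in> carrier G
       then (\<Sum>g\<in>{y \<in> carrier G. \<alpha> y \<noteq> 0}. \<alpha> g * \<beta> (inv\<^bsub>G\<^esub> g \<otimes>\<^bsub>G\<^esub> x))
       else 0)"

text \<open>Oriented involution: (\<Sum> a_g g)^\<circledast> = \<Sum> a_g \<sigma>(g) g^*, i.e. the coefficient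
  at x is \<sigma>(x^*) a_{x^*}.\<close>
definition oriented_inv :: "('g, 'b) monoid_scheme \<Rightarrow> ('g \<Rightarrow> 'g) \<Rightarrow> ('g \<Rightarrow> int) \<Rightarrow> ('g \<Rightarrow> 'f::field) \<Rightarrow> ('g \<Rightarrow> 'f)" where
  "oriented_inv G s \<sigma> \<alpha> = (\<lambda>x. if x \<in> carrier G then of_int (\<sigma> (s x)) * \<alpha> (s x) else 0)"

definition ga_normal :: "('g, 'b) monoid_scheme \<Rightarrow> ('g \<Rightarrow> 'g) \<Rightarrow> ('g \<Rightarrow> int) \<Rightarrow> ('f::field) itself \<Rightarrow> bool" where
  "ga_normal G s \<sigma> _ \<longleftrightarrow>
     (\<forall>\<alpha> \<in> (group_alg G :: ('g \<Rightarrow> 'f) set).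
        ga_mult G \<alpha> (oriented_inv G s \<sigma> \<alpha>) = ga_mult G (oriented_inv G s \<sigma> \<alpha>) \<alpha>)"

end

theory Submission
  imports Defs
begin

text \<open>Apply normality to the two-term element \<open>\<alpha> = g + h\<^sup>*\<close> and compare the
  coefficients of \<open>gh\<close> in \<open>\<alpha>\<alpha>\<^sup>\<circledast>\<close> and \<open>\<alpha>\<^sup>\<circledast>\<alpha>\<close>. Normality at single group elements
  gives \<open>xx\<^sup>* = x\<^sup>*x\<close>, which cancels two of the four terms on each side and leaves
  \<open>\<sigma>(h) + \<sigma>(g)[gh = (gh)\<^sup>*] = \<sigma>(g)[gh = g\<^sup>*h\<^sup>*] + \<sigma>(h)[gh = hg]\<close> in \<open>\<bbbF>\<close>,
  where \<open>\<sigma>(h\<^sup>*) = \<sigma>(h)\<close> because \<open>hh\<^sup>* \<in> ker \<sigma>\<close>. Since the signs are \<open>\<plusminus>1\<close> and \<open>2 \<noteq> 0\<close>,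
  this identity forces \<open>[gh = hg]\<close> or \<open>[gh = g\<^sup>*h\<^sup>*]\<close> to be 1 when \<open>\<sigma>(g) = \<sigma>(h)\<close>, and
  \<open>[gh = hg]\<close> or \<open>[gh = (gh)\<^sup>*]\<close> to be 1 when \<open>\<sigma>(g) = -\<sigma>(h)\<close>.\<close>

definition ga_two_term :: "'f \<Rightarrow> 'g \<Rightarrow> 'f \<Rightarrow> 'g \<Rightarrow> 'g \<Rightarrow> 'f::field" where
  "ga_two_term u a v b = (\<lambda>y. u * of_bool (y = a) + v * of_bool (y = b))"

lemma ga_two_term_in_group_alg:
  assumes "a \<in> carrier G" "b \<in> carrier G"
  shows "ga_two_term u a v b \<in> group_alg G"
proof -
  have "{y. ga_two_term u a v b y \<noteq> 0} \<subseteq> {a, b}"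
    unfolding ga_two_term_def by auto
  then show ?thesis
    unfolding group_alg_def using assms finite_subset by fastforce
qed

lemma ga_mult_eq_sum_superset:
  assumes "finite S" "S \<subseteq> carrier G" "{y \<in> carrier G. \<alpha> y \<noteq> 0} \<subseteq> S" "x \<in> carrier G"
  shows "ga_mult G \<alpha> \<beta> x = (\<Sum>y\<in>S. \<alpha> y * \<beta> (inv\<^bsub>G\<^esub> y \<otimes>\<^bsub>G\<^esub> x))"
  unfolding ga_mult_def using assms by (auto intro: sum.mono_neutral_left)

lemma ga_mult_two_term_left:
  assumes "a \<in> carrier G" "b \<in> carrier G" "x \<in> carrier G"
  shows "ga_mult G (ga_two_term u a v b) \<beta> x
           = u * \<beta> (inv\<^bsub>G\<^esub> a \<otimes>\<^bsub>G\<^esub> x) + v * \<beta> (inv\<^bsub>G\<^esub> b \<otimes>\<^bsub>G\<^esub> x)"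
proof -
  have "ga_mult G (ga_two_term u a v b) \<beta> x
          = (\<Sum>y\<in>{a, b}. ga_two_term u a v b y * \<beta> (inv\<^bsub>G\<^esub> y \<otimes>\<^bsub>G\<^esub> x))"
    by (rule ga_mult_eq_sum_superset) (use assms in \<open>auto simp: ga_two_term_def\<close>)
  also have "\<dots> = u * \<beta> (inv\<^bsub>G\<^esub> a \<otimes>\<^bsub>G\<^esub> x) + v * \<beta> (inv\<^bsub>G\<^esub> b \<otimes>\<^bsub>G\<^esub> x)"
    by (simp add: ga_two_term_def distrib_right sum.distrib mult.assoc sum_distrib_left[symmetric]
        of_bool_def if_distrib[of "\<lambda>t. t * _"] cong: if_cong)
  finally show ?thesis .
qed

lemma ga_mult_two_terms:
  assumes "group G" and "a \<in> carrier G" "b \<in> carrier G" "c \<in> carrier G" "d \<in> carrier G"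
    and "x \<in> carrier G"
  shows "ga_mult G (ga_two_term u a v b) (ga_two_term u' c v' d) x
       = u * u' * of_bool (x = a \<otimes>\<^bsub>G\<^esub> c) + u * v' * of_bool (x = a \<otimes>\<^bsub>G\<^esub> d)
       + v * u' * of_bool (x = b \<otimes>\<^bsub>G\<^esub> c) + v * v' * of_bool (x = b \<otimes>\<^bsub>G\<^esub> d)"
proof -
  interpret group G by fact
  show ?thesis
    unfolding ga_mult_two_term_left[OF assms(2,3,6)]
    using assms by (simp add: ga_two_term_def inv_solve_left' algebra_simps)
qed

lemma oriented_inv_two_term:
  assumes "group_involution G s" and "a \<in> carrier G" "b \<in> carrier G"
  shows "oriented_inv G s \<sigma> (ga_two_term u a v b)
           = ga_two_term (of_int (\<sigma> a) * u) (s a) (of_int (\<sigma> b) * v) (s b)"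
proof
  fix x
  have closed: "s a \<in> carrier G" "s b \<in> carrier G"
    and swap: "\<And>y z. y \<in> carrier G \<Longrightarrow> z \<in> carrier G \<Longrightarrow> s y = z \<longleftrightarrow> y = s z"
    using assms unfolding group_involution_def by auto
  show "oriented_inv G s \<sigma> (ga_two_term u a v b) x
          = ga_two_term (of_int (\<sigma> a) * u) (s a) (of_int (\<sigma> b) * v) (s b) x"
  proof (cases "x \<in> carrier G")
    case True
    then show ?thesis
      using swap[OF True assms(2)] swap[OF True assms(3)]
      unfolding oriented_inv_def ga_two_term_def by (auto simp: algebra_simps)
  next
    case False
    then show ?thesis
      using closed unfolding oriented_inv_def ga_two_term_def by auto
  qed
qed

lemma ga_normal_two_term_coeff:
  assumes "group G" "group_involution G s" "ga_normal G s \<sigma> TYPE('f::field)"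
    and "a \<in> carrier G" "b \<in> carrier G" "x \<in> carrier G"
  shows "u * (of_int (\<sigma> a) * u) * of_bool (x = a \<otimes>\<^bsub>G\<^esub> s a)
       + u * (of_int (\<sigma> b) * v) * of_bool (x = a \<otimes>\<^bsub>G\<^esub> s b)
       + v * (of_int (\<sigma> a) * u) * of_bool (x = b \<otimes>\<^bsub>G\<^esub> s a)
       + v * (of_int (\<sigma> b) * v) * of_bool (x = b \<otimes>\<^bsub>G\<^esub> s b)
     = of_int (\<sigma> a) * u * u * of_bool (x = s a \<otimes>\<^bsub>G\<^esub> a)
       + of_int (\<sigma> a) * u * v * of_bool (x = s a \<otimes>\<^bsub>G\<^esub> b)
       + of_int (\<sigma> b) * v * u * of_bool (x = s b \<otimes>\<^bsub>G\<^esub> a)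
       + of_int (\<sigma> b) * (v :: 'f) * v * of_bool (x = s b \<otimes>\<^bsub>G\<^esub> b)"
proof -
  have s_closed: "s a \<in> carrier G" "s b \<in> carrier G"
    using assms unfolding group_involution_def by auto
  let ?\<alpha> = "ga_two_term u a v b"
  have "ga_mult G ?\<alpha> (oriented_inv G s \<sigma> ?\<alpha>) x = ga_mult G (oriented_inv G s \<sigma> ?\<alpha>) ?\<alpha> x"
    using assms ga_two_term_in_group_alg unfolding ga_normal_def by metis
  then show ?thesis
    unfolding oriented_inv_two_term[OF assms(2,4,5)]
      ga_mult_two_terms[OF assms(1,4,5) s_closed assms(6)]
      ga_mult_two_terms[OF assms(1) s_closed assms(4,5,6)] .
qed

lemma ga_normal_mult_involution_commute:
  fixes G (structure)
  assumes "group G" "group_involution G s" "orientation G \<sigma>" "ga_normal G s \<sigma> TYPE('f::field)"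
    and "a \<in> carrier G"
  shows "a \<otimes> s a = s a \<otimes> a"
proof -
  interpret group G by fact
  have "s a \<in> carrier G" "\<sigma> a \<in> {1, -1}"
    using assms unfolding group_involution_def orientation_def by auto
  then have "a \<otimes> s a \<in> carrier G" "(of_int (\<sigma> a) :: 'f) \<noteq> 0"
    using assms(5) by auto
  with ga_normal_two_term_coeff[where u = 1 and v = 0, OF assms(1,2,4,5,5) this(1)]
  show ?thesis by simp
qed

lemma orientation_involution_invariant:
  assumes "orientation G \<sigma>" "group_involution G s" "\<forall>x\<in>carrier G. \<sigma> (x \<otimes>\<^bsub>G\<^esub> s x) = 1"
    and "a \<in> carrier G"
  shows "\<sigma> (s a) = \<sigma> a"
proof -
  have "s a \<in> carrier G" using assms unfolding group_involution_def by auto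
  then have "\<sigma> a * \<sigma> (s a) = 1" "\<sigma> a \<in> {1, -1}" "\<sigma> (s a) \<in> {1, -1}"
    using assms unfolding orientation_def by auto
  then show ?thesis by auto
qed

lemma ga_normal_product_coeff:
  fixes G (structure)
  assumes "group G" "group_involution G s" "orientation G \<sigma>" "ga_normal G s \<sigma> TYPE('f::field)"
    and "\<sigma> (s h) = \<sigma> h" and "g \<in> carrier G" "h \<in> carrier G"
  shows "of_int (\<sigma> h) + of_int (\<sigma> g) * of_bool (g \<otimes> h = s (g \<otimes> h))
       = of_int (\<sigma> g) * of_bool (g \<otimes> h = s g \<otimes> s h) + of_int (\<sigma> h) * (of_bool (g \<otimes> h = h \<otimes> g) :: 'f)"
proof -
  interpret group G by fact
  have inv: "s g \<in> carrier G" "s h \<in> carrier G" "s (s h) = h" "s (g \<otimes> h) = s h \<otimes> s g"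
    using assms unfolding group_involution_def by auto
  have "s g \<otimes> g = g \<otimes> s g" "h \<otimes> s h = s h \<otimes> h"
    using ga_normal_mult_involution_commute[OF assms(1-4)] assms(6) inv(2,3) by metis+
  with ga_normal_two_term_coeff[where u = 1 and v = 1, OF assms(1,2,4,6) inv(2) m_closed[OF assms(6,7)]]
  show ?thesis
    unfolding inv(3,4) assms(5) by (simp add: algebra_simps)
qed

lemma sign_indicator_identity_cases:
  fixes a b :: int
  assumes "(2::'f::field) \<noteq> 0" "a \<in> {1, -1}" "b \<in> {1, -1}"
    and "of_int a + of_int b * of_bool P = of_int b * of_bool Q + of_int a * (of_bool R :: 'f)"
  shows "(b * a = 1 \<longrightarrow> R \<or> Q) \<and> (b * a = -1 \<longrightarrow> R \<or> P)"
proof -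
  have "(1::'f) \<noteq> -1" "(1::'f) + 1 \<noteq> 0"
    using assms(1) by (metis one_add_one neg_eq_iff_add_eq_0)+
  then show ?thesis
    using assms(2-4) by (cases P; cases Q; cases R) auto
qed

theorem lemma6:
  fixes G :: "('g, 'b) monoid_scheme" and s :: "'g \<Rightarrow> 'g" and \<sigma> :: "'g \<Rightarrow> int"
    and g h :: 'g
  assumes "infinite (UNIV :: 'f::field set)"
    and "(2::'f) \<noteq> 0"
    and "group G"
    and "group_involution G s"
    and "orientation G \<sigma>"
    and "\<exists>x\<in>carrier G. \<sigma> x \<noteq> 1"
    and "\<forall>x\<in>carrier G. \<sigma> (x \<otimes>\<^bsub>G\<^esub> s x) = 1"
    and "ga_normal G s \<sigma> TYPE('f)"
    and "g \<in> carrier G" and "h \<in> carrier G"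
  shows "(\<sigma> g * \<sigma> h = 1 \<longrightarrow>
            g \<otimes>\<^bsub>G\<^esub> h = h \<otimes>\<^bsub>G\<^esub> g \<or> g \<otimes>\<^bsub>G\<^esub> h = s g \<otimes>\<^bsub>G\<^esub> s h)
       \<and> (\<sigma> g * \<sigma> h = -1 \<longrightarrow>
            g \<otimes>\<^bsub>G\<^esub> h = h \<otimes>\<^bsub>G\<^esub> g \<or> g \<otimes>\<^bsub>G\<^esub> h = s (g \<otimes>\<^bsub>G\<^esub> h))"
proof -
  have sign: "\<sigma> g \<in> {1, -1}" "\<sigma> h \<in> {1, -1}"
    using assms(5,9,10) unfolding orientation_def by auto
  have "\<sigma> (s h) = \<sigma> h"
    by (rule orientation_involution_invariant[OF assms(5,4,7,10)])
  then have "of_int (\<sigma> h) + of_int (\<sigma> g) * of_bool (g \<otimes>\<^bsub>G\<^esub> h = s (g \<otimes>\<^bsub>G\<^esub> h))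
      = of_int (\<sigma> g) * of_bool (g \<otimes>\<^bsub>G\<^esub> h = s g \<otimes>\<^bsub>G\<^esub> s h)
        + of_int (\<sigma> h) * (of_bool (g \<otimes>\<^bsub>G\<^esub> h = h \<otimes>\<^bsub>G\<^esub> g) :: 'f)"
    by (rule ga_normal_product_coeff[OF assms(3,4,5,8) _ assms(9,10)])
  then show ?thesis
    by (rule sign_indicator_identity_cases[OF assms(2) sign(2,1)])
qed

end
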